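(* Let $\Sigma$ be a $d\times d$ positive definite matrix and let $R_1,R_2$ be $d\times d$ matrices with $R_1R_1^T=R_2R_2^T=\Sigma$ (two generation matrices of a Brownian motion with covariance $\Sigma$). Let $f:\mathbb{R}^d\to\mathbb{R}$ be such that $g_1(\bm z)=f(R_1\bm z)$ and $g_2(\bm z)=f(R_2\bm z)$ are differentiable almost everywhere with finite gradient information matrices. Then $g_1$ and $g_2$ have the same active subspaces, and their analytic expressions in the $d$-dimensional active subspace coincide: $g_1^{\mathrm A}(\bm z)=g_2^{\mathrm A}(\bm z)$.
   Context: For an a.e. differentiable $g:\mathbb{R}^d\to\mathbb{R}$ and $\bm{Z}\sim N(\bm 0,I_d)$, the gradient information matrix is $C=\mathbb{E}\big(\nabla g(\bm{Z})\nabla g(\bm{Z})^T\big)=Q\Lambda Q^T$ (eigendecomposition, $Q$ orthogonal, eigenvalues in descending order); the $r$-dimensional active subspace is spanned by the first $r$ columns of $Q$, and $g^{\mathrm A}(\bm z):=g(Q\bm z)$. Since $g_2(\bm z)=g_1(U\bm z)$ for the orthogonal matrix $U=R_1^{-1}R_2$, "the same active subspaces" means: identifying coordinates $\bm x$ of $g_1$ and $\bm y=U^T\bm x$ of $g_2$ as coordinates of the same vector in bases $(\bm\alpha_i)$ and $(\bm\beta_i)=(\bm\alpha_i)U$ of a common inner product space, the $r$-dimensional active subspaces coincide for every $r$, with eigenvector matrices chosen correspondingly ($Q_2=U^TQ_1$) when eigenvalues are repeated. *)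

theory Defs
  imports "HOL-Probability.Probability"
begin

definition std_gaussian :: "(real^'n) measure" where
  "std_gaussian = density lborel (\<lambda>z. ennreal (\<Prod>i\<in>UNIV. std_normal_density (z $ i)))"

text \<open>Gradient of g at z (meaningful where g is differentiable at z).\<close>
definition gradient :: "(real^'n \<Rightarrow> real) \<Rightarrow> real^'n \<Rightarrow> real^'n" where
  "gradient g z = (SOME v. (g has_derivative (\<lambda>h. v \<bullet> h)) (at z))"

definition grad_info_finite :: "(real^'n \<Rightarrow> real) \<Rightarrow> bool" where
  "grad_info_finite g \<longleftrightarrow>
     (AE z in std_gaussian. g differentiable (at z)) \<and>
     (\<forall>i j. integrable std_gaussian (\<lambda>z. gradient g z $ i * gradient g z $ j))"

definition grad_info :: "(real^'n \<Rightarrow> real) \<Rightarrow> real^'n^'n" where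
  "grad_info g = (\<chi> i j. integral\<^sup>L std_gaussian (\<lambda>z. gradient g z $ i * gradient g z $ j))"

definition diag_mat :: "real^'n \<Rightarrow> real^'n^'n" where
  "diag_mat lam = (\<chi> i j. if i = j then lam $ i else 0)"

definition pos_def :: "real^'n^'n \<Rightarrow> bool" where
  "pos_def S \<longleftrightarrow> transpose S = S \<and> (\<forall>x. x \<noteq> 0 \<longrightarrow> x \<bullet> (S *v x) > 0)"

definition eig_decomp_desc :: "real^('n::{finite,linorder})^('n::{finite,linorder}) \<Rightarrow> real^('n::{finite,linorder})^('n::{finite,linorder}) \<Rightarrow> real^('n::{finite,linorder}) \<Rightarrow> bool" where
  "eig_decomp_desc C Q lam \<longleftrightarrow>
     orthogonal_matrix Q \<and> C = Q ** diag_mat lam ** transpose Q \<and>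
     (\<forall>i j. i \<le> j \<longrightarrow> lam $ j \<le> lam $ i)"

text \<open>r-dimensional active subspace: span of the first r columns of Q.\<close>
definition active_subspace :: "real^('n::{finite,linorder})^('n::{finite,linorder}) \<Rightarrow> nat \<Rightarrow> (real^('n::{finite,linorder})) set" where
  "active_subspace Q r = span {column i Q | i. card {j. j < i} < r}"

definition active_fun :: "(real^'n \<Rightarrow> real) \<Rightarrow> real^'n^'n \<Rightarrow> real^'n \<Rightarrow> real" where
  "active_fun g Q z = g (Q *v z)"

end

(* With U = R1^-1 R2 the identity R1 R1^T = R2 R2^T says exactly that U is orthogonal, and
   g2 = g1 o U.  The standard Gaussian measure is invariant under orthogonal maps: Lebesgue
   measure is, and the Gaussian density depends on |z| only.  By the chain rule
   grad g2 (z) = U^T grad g1 (U z), so substituting z := U^T z in the defining integral gives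
   C2 = U^T C1 U.  Therefore (U^T Q, lam) is a descending eigendecomposition of C2 iff (Q, lam)
   is one of C1, U^T maps the columns of Q to those of U^T Q, and g2 (U^T Q z) = g1 (Q z). *)

theory Submission
  imports Defs
begin

declare transpose_matrix_vector [simp del]

(* The change-of-variables results of HOL-Analysis are stated for well-ordered index types;
   this copy of a countable type, ordered through to_nat, lets us use them for any finite one. *)
typedef 'a nat_ordered = "UNIV :: 'a set" ..

instantiation nat_ordered :: (countable) wellorder
begin

definition less_eq_nat_ordered :: "'a nat_ordered \<Rightarrow> 'a nat_ordered \<Rightarrow> bool"
  where "x \<le> y \<longleftrightarrow> to_nat (Rep_nat_ordered x) \<le> to_nat (Rep_nat_ordered y)"

definition less_nat_ordered :: "'a nat_ordered \<Rightarrow> 'a nat_ordered \<Rightarrow> bool"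
  where "x < y \<longleftrightarrow> to_nat (Rep_nat_ordered x) < to_nat (Rep_nat_ordered y)"

instance
proof
  fix P :: "'a nat_ordered \<Rightarrow> bool" and a
  assume step: "\<And>x. (\<And>y. y < x \<Longrightarrow> P y) \<Longrightarrow> P x"
  show "P a"
    by (induct "to_nat (Rep_nat_ordered a)" arbitrary: a rule: less_induct)
       (rule step, auto simp: less_nat_ordered_def)
qed (auto simp: less_eq_nat_ordered_def less_nat_ordered_def Rep_nat_ordered_inject)

end

instance nat_ordered :: (finite) finite
  by standard (metis type_definition.Abs_image[OF type_definition_nat_ordered] finite_imageI finite)

lemma bij_Rep_nat_ordered: "bij Rep_nat_ordered"
  and bij_Abs_nat_ordered: "bij Abs_nat_ordered"
  by (rule bij_betw_byWitness[where f' = Abs_nat_ordered]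
      bij_betw_byWitness[where f' = Rep_nat_ordered];
      simp add: Rep_nat_ordered_inverse Abs_nat_ordered_inverse)+

lemma borel_measurable_linear:
  fixes f :: "'a::euclidean_space \<Rightarrow> 'b::euclidean_space"
  shows "linear f \<Longrightarrow> f \<in> borel_measurable borel"
  by (intro borel_measurable_continuous_onI linear_continuous_on linear_conv_bounded_linear[THEN iffD1])

lemma prod_Basis_vec: "(\<Prod>b\<in>Basis. (x::real^'n) \<bullet> b) = (\<Prod>i\<in>UNIV. x $ i)"
  by (simp add: Basis_vec_def cart_eq_inner_axis axis_eq_axis prod.UNION_disjoint)

lemma emeasure_lborel_box_cart:
  fixes l u :: "real^'n"
  assumes "\<And>i. l $ i \<le> u $ i"
  shows "emeasure lborel (box l u) = (\<Prod>i\<in>UNIV. u $ i - l $ i)"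
proof -
  have "\<forall>b\<in>Basis. l \<bullet> b \<le> u \<bullet> b"
    using assms by (auto simp: Basis_vec_def inner_axis)
  then show ?thesis
    by (simp add: emeasure_lborel_box_eq prod_Basis_vec)
qed

lemma lborel_distr_reindex:
  fixes p :: "'m::finite \<Rightarrow> 'n::finite"
  assumes p: "bij p"
  shows "distr lborel borel (\<lambda>x::real^'n. \<chi> j. x $ p j) = (lborel :: (real^'m) measure)"
proof (rule lborel_eqI[symmetric])
  have [measurable]: "(\<lambda>x::real^'n. \<chi> j. x $ p j) \<in> borel_measurable borel"
    by (rule borel_measurable_linear) (auto simp: linear_iff vec_eq_iff)
  fix l u :: "real^'m"
  assume le_Basis: "\<And>b. b \<in> Basis \<Longrightarrow> l \<bullet> b \<le> u \<bullet> b"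
  have le: "l $ j \<le> u $ j" for j
    using le_Basis[of "axis j 1"] by (auto simp: Basis_vec_def cart_eq_inner_axis)
  let ?q = "inv p"
  have q: "bij ?q" "p (?q i) = i" "?q (p j) = j" for i j
    using p by (simp_all add: bij_imp_bij_inv bij_is_inj bij_is_surj surj_f_inv_f)
  have "(\<lambda>x. \<chi> j. x $ p j) -` box l u = box (\<chi> i. l $ ?q i) (\<chi> i. u $ ?q i)"
    using q by (auto simp: mem_box_cart) metis+
  moreover have "emeasure lborel (box (\<chi> i. l $ ?q i) (\<chi> i. u $ ?q i)) = (\<Prod>i\<in>UNIV. u $ ?q i - l $ ?q i)"
    using le by (simp add: emeasure_lborel_box_cart)
  moreover have "(\<Prod>i\<in>UNIV. u $ ?q i - l $ ?q i) = (\<Prod>j\<in>UNIV. u $ j - l $ j)"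
    using prod.reindex_bij_betw[OF q(1), of "\<lambda>j. u $ j - l $ j"] by simp
  ultimately show "emeasure (distr lborel borel (\<lambda>x. \<chi> j. x $ p j)) (box l u) = (\<Prod>b\<in>Basis. (u - l) \<bullet> b)"
    by (simp add: emeasure_distr prod_Basis_vec)
qed simp

lemma inner_reindex:
  fixes p :: "'m::finite \<Rightarrow> 'n::finite"
  assumes "bij p"
  shows "(\<chi> j. x $ p j) \<bullet> (\<chi> j. y $ p j) = (x::real^'n) \<bullet> y"
  using sum.reindex_bij_betw[OF assms, of "\<lambda>i. x $ i * y $ i"] by (simp add: inner_vec_def)

lemma lborel_distr_orthogonal_transformation_wellorder:
  fixes f :: "real^'n::{finite,wellorder} \<Rightarrow> real^'n::_"
  assumes f: "orthogonal_transformation f"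
  shows "distr lborel borel f = lborel"
proof (rule lborel_eqI[symmetric])
  have [measurable]: "f \<in> borel_measurable borel"
    using f by (simp add: borel_measurable_linear orthogonal_transformation_linear)
  fix l u :: "real^'n::_"
  assume le: "\<And>b. b \<in> Basis \<Longrightarrow> l \<bullet> b \<le> u \<bullet> b"
  have pre: "f -` box l u = inv f ` box l u"
    using f by (simp add: bij_vimage_eq_inv_image orthogonal_transformation_bij)
  have box: "box l u \<in> lmeasurable"
    by simp
  have inv: "orthogonal_transformation (inv f)"
    using f by (rule orthogonal_transformation_inv)
  have "f -` box l u \<in> sets borel"
    using measurable_sets_borel[of f borel "box l u"] by simp
  then have "emeasure (distr lborel borel f) (box l u) = emeasure lebesgue (f -` box l u)"
    by (simp add: emeasure_distr)
  also have "\<dots> = measure lebesgue (inv f ` box l u)"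
    using measurable_orthogonal_image[OF inv box] by (simp add: pre emeasure_eq_measure2)
  also have "\<dots> = measure lebesgue (box l u)"
    by (simp add: measure_orthogonal_image[OF inv box])
  also have "\<dots> = (\<Prod>b\<in>Basis. (u - l) \<bullet> b)"
    using le by (simp add: measure_def emeasure_lborel_box_eq)
  finally show "emeasure (distr lborel borel f) (box l u) = (\<Prod>b\<in>Basis. (u - l) \<bullet> b)" .
qed simp

lemma lborel_distr_orthogonal_transformation:
  fixes f :: "real^'n::finite \<Rightarrow> real^'n"
  assumes f: "orthogonal_transformation f"
  shows "distr lborel borel f = lborel"
proof -
  define to_copy :: "real^'n \<Rightarrow> real^('n nat_ordered)"
    where "to_copy x = (\<chi> j. x $ Rep_nat_ordered j)" for x
  define of_copy :: "real^('n nat_ordered) \<Rightarrow> real^'n"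
    where "of_copy y = (\<chi> i. y $ Abs_nat_ordered i)" for y
  have [measurable]: "f \<in> borel_measurable borel"
    using f by (simp add: borel_measurable_linear orthogonal_transformation_linear)
  have of_to: "of_copy (to_copy x) = x" for x
    by (simp add: to_copy_def of_copy_def Abs_nat_ordered_inverse vec_eq_iff)
  have lborel_of: "distr lborel borel of_copy = lborel"
    unfolding of_copy_def by (rule lborel_distr_reindex[OF bij_Abs_nat_ordered])
  have lin: "linear to_copy" "linear of_copy"
    by (auto simp: linear_iff vec_eq_iff to_copy_def of_copy_def)
  then have [measurable]: "to_copy \<in> borel_measurable borel" "of_copy \<in> borel_measurable borel"
    by (simp_all add: borel_measurable_linear)
  from lin have "linear (to_copy \<circ> f \<circ> of_copy)"
    using f by (intro linear_compose) (auto simp: orthogonal_transformation_linear)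
  moreover have "to_copy (f (of_copy v)) \<bullet> to_copy (f (of_copy w)) = v \<bullet> w" for v w
    using f unfolding to_copy_def of_copy_def orthogonal_transformation_def
    by (simp add: inner_reindex[OF bij_Rep_nat_ordered] inner_reindex[OF bij_Abs_nat_ordered])
  ultimately have "orthogonal_transformation (to_copy \<circ> f \<circ> of_copy)"
    by (simp add: orthogonal_transformation_def)
  then have lborel_copy: "distr lborel borel (to_copy \<circ> f \<circ> of_copy) = lborel"
    by (rule lborel_distr_orthogonal_transformation_wellorder)
  have "distr lborel borel f = distr (distr lborel borel of_copy) borel f"
    by (simp add: lborel_of)
  also have "\<dots> = distr lborel borel (of_copy \<circ> (to_copy \<circ> f \<circ> of_copy))"
    by (simp add: distr_distr comp_def of_to)
  also have "\<dots> = distr (distr lborel borel (to_copy \<circ> f \<circ> of_copy)) borel of_copy"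
    by (simp add: distr_distr)
  also have "\<dots> = lborel"
    by (simp add: lborel_copy lborel_of)
  finally show ?thesis .
qed

lemma std_normal_density_prod:
  "(\<Prod>i\<in>UNIV. std_normal_density ((z::real^'n) $ i)) = exp (- (norm z)\<^sup>2 / 2) / sqrt (2 * pi) ^ CARD('n)"
proof -
  have "(norm z)\<^sup>2 = (\<Sum>i\<in>UNIV. (z $ i)\<^sup>2)"
    unfolding power2_norm_eq_inner by (simp add: inner_vec_def power2_eq_square)
  then show ?thesis
    by (simp add: std_normal_density_def prod.distrib exp_sum prod_dividef sum_divide_distrib
        flip: sum_negf)
qed

lemma sets_std_gaussian: "sets std_gaussian = sets borel"
  by (simp add: std_gaussian_def)

lemma distr_std_gaussian_orthogonal_transformation:
  fixes f :: "real^'n::finite \<Rightarrow> real^'n"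
  assumes f: "orthogonal_transformation f"
  shows "distr std_gaussian std_gaussian f = std_gaussian"
proof -
  define \<phi> :: "real^'n \<Rightarrow> ennreal" where "\<phi> = (\<lambda>z. ennreal (\<Prod>i\<in>UNIV. std_normal_density (z $ i)))"
  have [measurable]: "f \<in> borel_measurable borel"
    using f by (simp add: borel_measurable_linear orthogonal_transformation_linear)
  have \<phi>_f: "\<phi> (f z) = \<phi> z" for z
    using f by (simp add: \<phi>_def std_normal_density_prod orthogonal_transformation_norm)
  have std_gaussian: "std_gaussian = density lborel \<phi>"
    by (simp add: std_gaussian_def \<phi>_def)
  also have "\<dots> = density (distr lborel borel f) \<phi>"
    by (simp add: lborel_distr_orthogonal_transformation[OF f])
  also have "\<dots> = distr (density lborel (\<lambda>z. \<phi> (f z))) borel f"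
    by (rule density_distr) (simp_all add: \<phi>_def)
  also have "\<dots> = distr std_gaussian std_gaussian f"
    by (rule distr_cong) (simp_all add: \<phi>_f std_gaussian)
  finally show ?thesis ..
qed

lemma measurable_std_gaussian_orthogonal_transformation:
  fixes f :: "real^'n::finite \<Rightarrow> real^'n"
  shows "orthogonal_transformation f \<Longrightarrow> f \<in> measurable std_gaussian std_gaussian"
  by (simp add: measurable_cong_sets[OF sets_std_gaussian sets_std_gaussian]
      borel_measurable_linear orthogonal_transformation_linear)

lemma integral_std_gaussian_orthogonal_transformation:
  fixes f :: "real^'n::finite \<Rightarrow> real^'n" and h :: "real^'n \<Rightarrow> real"
  assumes f: "orthogonal_transformation f" and h: "h \<in> borel_measurable std_gaussian"
  shows "(\<integral>z. h (f z) \<partial>std_gaussian) = (\<integral>z. h z \<partial>std_gaussian)"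
  using integral_distr[OF measurable_std_gaussian_orthogonal_transformation[OF f] h]
  by (simp add: distr_std_gaussian_orthogonal_transformation[OF f])

lemma integrable_std_gaussian_orthogonal_transformation:
  fixes f :: "real^'n::finite \<Rightarrow> real^'n" and h :: "real^'n \<Rightarrow> real"
  assumes f: "orthogonal_transformation f" and h: "integrable std_gaussian h"
  shows "integrable std_gaussian (\<lambda>z. h (f z))"
  using integrable_distr[OF measurable_std_gaussian_orthogonal_transformation[OF f]] h
  by (simp add: distr_std_gaussian_orthogonal_transformation[OF f])

lemma has_derivative_gradient:
  fixes g :: "real^'n \<Rightarrow> real"
  assumes "g differentiable (at z)"
  shows "(g has_derivative (\<lambda>h. gradient g z \<bullet> h)) (at z)"
proof -
  obtain D where D: "(g has_derivative D) (at z)"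
    using assms by (auto simp: differentiable_def)
  then have "linear D"
    by (rule has_derivative_linear)
  then have "D = (\<lambda>h. adjoint D 1 \<bullet> h)"
    by (auto simp: adjoint_works inner_commute)
  with D show ?thesis
    unfolding gradient_def by (metis (mono_tags) someI)
qed

lemma gradient_eqI:
  fixes g :: "real^'n \<Rightarrow> real"
  assumes "(g has_derivative (\<lambda>h. v \<bullet> h)) (at z)"
  shows "gradient g z = v"
proof -
  have "g differentiable (at z)"
    using assms by (auto simp: differentiable_def)
  then have "(\<lambda>h. gradient g z \<bullet> h) = (\<lambda>h. v \<bullet> h)"
    using has_derivative_gradient assms has_derivative_unique by blast
  then show ?thesis
    by (metis vector_eq_rdot)
qed

lemma gradient_compose_matrix:
  fixes g :: "real^'m \<Rightarrow> real" and A :: "real^'n^'m"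
  assumes "g differentiable (at (A *v z))"
  shows "gradient (\<lambda>x. g (A *v x)) z = transpose A *v gradient g (A *v z)"
proof (rule gradient_eqI)
  have "((\<lambda>x. A *v x) has_derivative (\<lambda>x. A *v x)) (at z)"
    by (simp add: bounded_linear_imp_has_derivative)
  from has_derivative_compose[OF this has_derivative_gradient[OF assms]]
  show "((\<lambda>x. g (A *v x)) has_derivative (\<lambda>h. (transpose A *v gradient g (A *v z)) \<bullet> h)) (at z)"
    by (simp add: dot_lmul_matrix transpose_matrix_vector)
qed

lemma congruence_matrix_entry:
  fixes A C :: "'a::comm_semiring_1^'n^'n"
  shows "(transpose A ** C ** A) $ i $ j = (\<Sum>k\<in>UNIV. \<Sum>l\<in>UNIV. A $ k $ i * A $ l $ j * C $ k $ l)"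
proof -
  have "(transpose A ** C ** A) $ i $ j = (\<Sum>l\<in>UNIV. \<Sum>k\<in>UNIV. A $ k $ i * A $ l $ j * C $ k $ l)"
    by (simp add: matrix_matrix_mult_def transpose_def sum_distrib_left sum_distrib_right mult_ac)
  also have "\<dots> = (\<Sum>k\<in>UNIV. \<Sum>l\<in>UNIV. A $ k $ i * A $ l $ j * C $ k $ l)"
    by (rule sum.swap)
  finally show ?thesis .
qed

lemma transpose_matrix_vector_entry_product:
  fixes A :: "'a::comm_semiring_1^'n^'n"
  shows "(transpose A *v v) $ i * (transpose A *v v) $ j =
    (\<Sum>k\<in>UNIV. \<Sum>l\<in>UNIV. A $ k $ i * A $ l $ j * (v $ k * v $ l))"
  by (simp add: matrix_vector_mult_def transpose_def sum_product mult_ac)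

lemma differentiable_compose_matrix:
  fixes g :: "real^'m \<Rightarrow> real" and A :: "real^'n^'m"
  assumes "g differentiable (at (A *v z))"
  shows "(\<lambda>x. g (A *v x)) differentiable (at z)"
  using differentiable_chain_at[of "\<lambda>x. A *v x", OF bounded_linear_imp_differentiable assms]
  by (simp add: o_def)

lemma gradient_compose_orthogonal_matrix:
  fixes U :: "real^'n^'n" and g :: "real^'n \<Rightarrow> real"
  assumes U: "orthogonal_matrix U" and "(\<lambda>x. g (U *v x)) differentiable (at z)"
  shows "gradient (\<lambda>x. g (U *v x)) z = transpose U *v gradient g (U *v z)"
proof (rule gradient_compose_matrix)
  have "(\<lambda>x. g (U *v x)) differentiable (at (transpose U *v (U *v z)))"
    using assms by (simp add: matrix_vector_mul_assoc orthogonal_matrix_def)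
  then have "(\<lambda>y. g (U *v (transpose U *v y))) differentiable (at (U *v z))"
    by (rule differentiable_compose_matrix)
  then show "g differentiable (at (U *v z))"
    using U by (simp add: matrix_vector_mul_assoc orthogonal_matrix_def)
qed

(* The hypothesis on g o U only supplies measurability of its gradient, which is an arbitrary
   choice wherever g o U is not differentiable. *)
lemma grad_info_orthogonal_compose:
  fixes U :: "real^'n::finite^'n" and g :: "real^'n \<Rightarrow> real"
  assumes U: "orthogonal_matrix U"
    and g: "grad_info_finite g" and gU: "grad_info_finite (\<lambda>z. g (U *v z))"
  shows "grad_info (\<lambda>z. g (U *v z)) = transpose U ** grad_info g ** U"
proof -
  let ?gU = "\<lambda>z. g (U *v z)"
  let ?Dg = "\<lambda>z. gradient g (U *v z)"
  have T: "orthogonal_transformation (\<lambda>x. U *v x)"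
    using U by (simp add: orthogonal_transformation_matrix)
  from gU have ae: "AE z in std_gaussian. gradient ?gU z = transpose U *v ?Dg z"
    unfolding grad_info_finite_def
    by (auto elim: eventually_mono simp: gradient_compose_orthogonal_matrix[OF U])
  have int: "integrable std_gaussian (\<lambda>z. ?Dg z $ k * ?Dg z $ l)" for k l
    using integrable_std_gaussian_orthogonal_transformation[OF T] g
    unfolding grad_info_finite_def by blast
  have "grad_info ?gU $ i $ j = (transpose U ** grad_info g ** U) $ i $ j" for i j
  proof -
    have "grad_info ?gU $ i $ j = (\<integral>z. gradient ?gU z $ i * gradient ?gU z $ j \<partial>std_gaussian)"
      by (simp add: grad_info_def)
    also have "\<dots> = (\<integral>z. (\<Sum>k\<in>UNIV. \<Sum>l\<in>UNIV. U $ k $ i * U $ l $ j * (?Dg z $ k * ?Dg z $ l)) \<partial>std_gaussian)"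
    proof (rule integral_cong_AE)
      show "(\<lambda>z. gradient ?gU z $ i * gradient ?gU z $ j) \<in> borel_measurable std_gaussian"
        using gU by (simp add: grad_info_finite_def borel_measurable_integrable)
      show "(\<lambda>z. \<Sum>k\<in>UNIV. \<Sum>l\<in>UNIV. U $ k $ i * U $ l $ j * (?Dg z $ k * ?Dg z $ l)) \<in> borel_measurable std_gaussian"
        using int by (intro borel_measurable_integrable) simp
      show "AE z in std_gaussian. gradient ?gU z $ i * gradient ?gU z $ j =
          (\<Sum>k\<in>UNIV. \<Sum>l\<in>UNIV. U $ k $ i * U $ l $ j * (?Dg z $ k * ?Dg z $ l))"
        using ae by eventually_elim (simp add: transpose_matrix_vector_entry_product)
    qed
    also have "\<dots> = (\<Sum>k\<in>UNIV. \<Sum>l\<in>UNIV. U $ k $ i * U $ l $ j * (\<integral>z. ?Dg z $ k * ?Dg z $ l \<partial>std_gaussian))"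
      using int by (simp add: integral_sum)
    also have "\<dots> = (\<Sum>k\<in>UNIV. \<Sum>l\<in>UNIV. U $ k $ i * U $ l $ j * grad_info g $ k $ l)"
    proof -
      have "(\<integral>z. ?Dg z $ k * ?Dg z $ l \<partial>std_gaussian) = grad_info g $ k $ l" for k l
        using integral_std_gaussian_orthogonal_transformation[OF T,
            of "\<lambda>z. gradient g z $ k * gradient g z $ l"] g
        by (simp add: grad_info_def grad_info_finite_def borel_measurable_integrable)
      then show ?thesis
        by simp
    qed
    also have "\<dots> = (transpose U ** grad_info g ** U) $ i $ j"
      by (simp add: congruence_matrix_entry)
    finally show ?thesis .
  qed
  then show ?thesis
    by (simp add: vec_eq_iff)
qed

lemma invertible_if_pos_def_mult_transpose:
  fixes R :: "real^'n^'n"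
  assumes "pos_def (R ** transpose R)"
  shows "invertible R"
proof -
  have "x = 0" if "transpose R *v x = 0" for x
  proof (rule ccontr)
    assume "x \<noteq> 0"
    with assms have "0 < x \<bullet> ((R ** transpose R) *v x)"
      by (simp add: pos_def_def)
    also have "\<dots> = 0"
      using that by (simp flip: matrix_vector_mul_assoc)
    finally show False
      by simp
  qed
  then have "invertible (transpose R)"
    by (simp add: invertible_left_inverse matrix_left_invertible_ker)
  then show ?thesis
    using transpose_invertible by fastforce
qed

lemma
  fixes A :: "'a::semiring_1^'n^'m"
  assumes "invertible A"
  shows matrix_inv_right: "A ** matrix_inv A = mat 1"
    and matrix_inv_left: "matrix_inv A ** A = mat 1"
  using someI_ex[OF assms[unfolded invertible_def]] by (simp_all add: matrix_inv_def)

lemma orthogonal_matrix_inv_mult: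
  fixes R1 R2 :: "real^'n^'n"
  assumes R1: "invertible R1" and eq: "R1 ** transpose R1 = R2 ** transpose R2"
  shows "orthogonal_matrix (matrix_inv R1 ** R2)"
proof -
  let ?V = "matrix_inv R1"
  have "transpose R1 ** transpose ?V = mat 1"
    by (metis matrix_inv_left[OF R1] matrix_transpose_mul transpose_mat)
  have "(?V ** R2) ** transpose (?V ** R2) = ?V ** (R2 ** transpose R2) ** transpose ?V"
    by (simp add: matrix_transpose_mul matrix_mul_assoc)
  also have "\<dots> = (?V ** R1) ** (transpose R1 ** transpose ?V)"
    by (simp add: matrix_mul_assoc flip: eq)
  also have "\<dots> = mat 1"
    by (simp add: matrix_inv_left[OF R1] \<open>transpose R1 ** transpose ?V = mat 1\<close>)
  finally show ?thesis
    by (simp add: orthogonal_matrix matrix_left_right_inverse)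
qed

lemma congruence_orthogonal_matrix_eq_iff:
  fixes U X Y :: "real^'n^'n"
  assumes U: "orthogonal_matrix U"
  shows "transpose U ** X ** U = transpose U ** Y ** U \<longleftrightarrow> X = Y"
proof
  have "U ** (transpose U ** X ** U) ** transpose U = (U ** transpose U) ** X ** (U ** transpose U)" for X
    by (simp add: matrix_mul_assoc)
  then have "U ** (transpose U ** X ** U) ** transpose U = X" for X
    using U by (simp add: orthogonal_matrix_def)
  then show "transpose U ** X ** U = transpose U ** Y ** U \<Longrightarrow> X = Y"
    by metis
qed simp

lemma eig_decomp_desc_orthogonal_congruence:
  fixes U C Q :: "real^('n::{finite,linorder})^('n::{finite,linorder})"
  assumes U: "orthogonal_matrix U"
  shows "eig_decomp_desc (transpose U ** C ** U) (transpose U ** Q) lam \<longleftrightarrow> eig_decomp_desc C Q lam"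
proof -
  have "orthogonal_matrix (transpose U ** Q) \<longleftrightarrow> orthogonal_matrix Q"
  proof
    assume "orthogonal_matrix (transpose U ** Q)"
    with U have "orthogonal_matrix (U ** (transpose U ** Q))"
      by (rule orthogonal_matrix_mul)
    moreover have "U ** (transpose U ** Q) = Q"
      using U by (simp add: matrix_mul_assoc orthogonal_matrix_def)
    ultimately show "orthogonal_matrix Q"
      by simp
  qed (simp add: U orthogonal_matrix_mul)
  moreover have "(transpose U ** Q) ** diag_mat lam ** transpose (transpose U ** Q) =
      transpose U ** (Q ** diag_mat lam ** transpose Q) ** U"
    by (simp add: matrix_transpose_mul matrix_mul_assoc)
  ultimately show ?thesis
    by (simp add: eig_decomp_desc_def congruence_orthogonal_matrix_eq_iff[OF U])
qed

lemma column_matrix_mult: "column i (A ** B) = A *v column i B"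
  by (simp add: vec_eq_iff column_def matrix_matrix_mult_def matrix_vector_mult_def mult.commute)

lemma active_subspace_matrix_mult:
  fixes A Q :: "real^('n::{finite,linorder})^('n::{finite,linorder})"
  shows "(\<lambda>x. A *v x) ` active_subspace Q r = active_subspace (A ** Q) r"
proof -
  let ?cols = "\<lambda>Q. {column i Q | i. card {j. j < i} < r}"
  have "(\<lambda>x. A *v x) ` ?cols Q = ?cols (A ** Q)"
    by (auto simp: column_matrix_mult)
  moreover have "(\<lambda>x. A *v x) ` span (?cols Q) = span ((\<lambda>x. A *v x) ` ?cols Q)"
    by (simp add: span_linear_image matrix_vector_mul_linear)
  ultimately show ?thesis
    unfolding active_subspace_def by simp
qed

lemma active_fun_compose_matrix: "active_fun (\<lambda>z. g (A *v z)) Q = active_fun g (A ** Q)"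
  by (rule ext) (simp add: active_fun_def matrix_vector_mul_assoc)

theorem corollary3p4:
  fixes Sigma R1 R2 :: "real^('n::{finite,linorder})^('n::{finite,linorder})"
    and f :: "real^('n::{finite,linorder}) \<Rightarrow> real"
  assumes "pos_def Sigma"
    and "R1 ** transpose R1 = Sigma" and "R2 ** transpose R2 = Sigma"
    and "grad_info_finite (\<lambda>z. f (R1 *v z))"
    and "grad_info_finite (\<lambda>z. f (R2 *v z))"
  shows "let g1 = (\<lambda>z. f (R1 *v z)); g2 = (\<lambda>z. f (R2 *v z)); U = matrix_inv R1 ** R2 in
           orthogonal_matrix U \<and>
           (\<forall>Q lam. eig_decomp_desc (grad_info g1) Q lam \<longleftrightarrow>
                    eig_decomp_desc (grad_info g2) (transpose U ** Q) lam) \<and>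
           (\<forall>Q lam r. eig_decomp_desc (grad_info g1) Q lam \<longrightarrow>
                    (\<lambda>x. transpose U *v x) ` active_subspace Q r = active_subspace (transpose U ** Q) r) \<and>
           (\<forall>Q lam. eig_decomp_desc (grad_info g1) Q lam \<longrightarrow>
                    active_fun g1 Q = active_fun g2 (transpose U ** Q))"
proof -
  define g1 where "g1 = (\<lambda>z. f (R1 *v z))"
  define U where "U = matrix_inv R1 ** R2"
  have R1: "invertible R1"
    using assms(1,2) by (simp add: invertible_if_pos_def_mult_transpose)
  have U: "orthogonal_matrix U"
    using orthogonal_matrix_inv_mult[OF R1] assms(2,3) by (simp add: U_def)
  have g2: "(\<lambda>z. f (R2 *v z)) = (\<lambda>z. g1 (U *v z))"
    by (simp add: g1_def U_def matrix_vector_mul_assoc matrix_inv_right[OF R1] matrix_mul_assoc)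
  have C: "grad_info (\<lambda>z. g1 (U *v z)) = transpose U ** grad_info g1 ** U"
    using grad_info_orthogonal_compose[OF U] assms(4,5) by (simp add: g1_def g2)
  have "active_fun g1 Q = active_fun (\<lambda>z. g1 (U *v z)) (transpose U ** Q)" for Q
    using U by (simp add: active_fun_compose_matrix orthogonal_matrix_def matrix_mul_assoc)
  then show ?thesis
    unfolding Let_def g1_def[symmetric] U_def[symmetric] g2 C
    using U by (simp add: eig_decomp_desc_orthogonal_congruence active_subspace_matrix_mult)
qed

end
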